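(* Let $q$ be a self-join-free Boolean conjunctive query, let $q_0\subseteq q$, let $\mathbf{db}$ be a database, and let $\mathbf{o}$ be a garbage set for $q_0$ in $\mathbf{db}$. If every garbage set for $q_0$ in $\mathbf{db}\setminus\mathbf{o}$ is empty, then $\mathbf{o}$ is the maximal (with respect to $\subseteq$) garbage set for $q_0$ in $\mathbf{db}$.
   Context: Every relation name has a signature $[n,k]$ ($1\le k\le n$; primary-key positions $1,\dots,k$) and a mode in $\{\mathsf{c},\mathsf{i}\}$. Facts are variable-free atoms; facts are key-equal if same relation name and same primary-key values. A database is a finite set of facts with no two distinct key-equal facts of mode $\mathsf{c}$, all of whose relation names occur in $q$. The block of a fact $A$ in $\mathbf{db}$ is the set of facts of $\mathbf{db}$ key-equal to $A$. A repair of a set of facts is a maximal subset without two distinct key-equal facts. A self-join-free Boolean conjunctive query is a finite set of atoms with distinct relation names; for a fact $A$, $\mathrm{atom}(A)$ is the atom of $q$ with the same relation name. A subset $\mathbf{o}\subseteq\mathbf{db}$ is a garbage set for $q_0$ in $\mathbf{db}$ if (1) for every $A\in\mathbf{o}$, $\mathrm{atom}(A)\in q_0$ and the block of $A$ in $\mathbf{db}$ is included in $\mathbf{o}$; and (2) there is a repair $\mathbf{r}$ of $\mathbf{o}$ such that for every valuation $\theta$ of the variables of $q$, if $\theta(q)\subseteq(\mathbf{db}\setminus\mathbf{o})\cup\mathbf{r}$ then $\theta(q_0)\cap\mathbf{r}=\emptyset$. Garbage sets are closed under union, so a unique maximal garbage set exists. *)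

theory Defs
  imports Main
begin

datatype ('v, 'c) trm = Var 'v | Cst 'c

type_synonym ('r, 'v, 'c) atom = "'r \<times> ('v, 'c) trm list"
type_synonym ('r, 'c) fact = "'r \<times> 'c list"

datatype mode = ModeC | ModeI

record 'r schema =
  arity :: "'r \<Rightarrow> nat"
  keylen :: "'r \<Rightarrow> nat"
  rmode :: "'r \<Rightarrow> mode"

definition wf_schema :: "'r schema \<Rightarrow> bool" where
  "wf_schema S \<longleftrightarrow> (\<forall>R. 1 \<le> keylen S R \<and> keylen S R \<le> arity S R)"

definition wf_atom :: "'r schema \<Rightarrow> ('r, 'v, 'c) atom \<Rightarrow> bool" where
  "wf_atom S A \<longleftrightarrow> length (snd A) = arity S (fst A)"

definition wf_fact :: "'r schema \<Rightarrow> ('r, 'c) fact \<Rightarrow> bool" where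
  "wf_fact S f \<longleftrightarrow> length (snd f) = arity S (fst f)"

definition sjf_query :: "'r schema \<Rightarrow> ('r, 'v, 'c) atom set \<Rightarrow> bool" where
  "sjf_query S q \<longleftrightarrow> finite q \<and> (\<forall>A\<in>q. wf_atom S A)
     \<and> (\<forall>A\<in>q. \<forall>B\<in>q. fst A = fst B \<longrightarrow> A = B)"

definition key_equal :: "'r schema \<Rightarrow> ('r, 'c) fact \<Rightarrow> ('r, 'c) fact \<Rightarrow> bool" where
  "key_equal S f g \<longleftrightarrow> fst f = fst g \<and>
     take (keylen S (fst f)) (snd f) = take (keylen S (fst g)) (snd g)"

definition database :: "'r schema \<Rightarrow> ('r, 'v, 'c) atom set \<Rightarrow> ('r, 'c) fact set \<Rightarrow> bool" where
  "database S q db \<longleftrightarrow> finite db \<and> (\<forall>f\<in>db. wf_fact S f)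
     \<and> (\<forall>f\<in>db. \<forall>g\<in>db. key_equal S f g \<and> f \<noteq> g \<longrightarrow> rmode S (fst f) \<noteq> ModeC)
     \<and> (\<forall>f\<in>db. \<exists>A\<in>q. fst A = fst f)"

definition block :: "'r schema \<Rightarrow> ('r, 'c) fact set \<Rightarrow> ('r, 'c) fact \<Rightarrow> ('r, 'c) fact set" where
  "block S db A = {B \<in> db. key_equal S A B}"

definition consistent :: "'r schema \<Rightarrow> ('r, 'c) fact set \<Rightarrow> bool" where
  "consistent S r \<longleftrightarrow> (\<forall>f\<in>r. \<forall>g\<in>r. key_equal S f g \<longrightarrow> f = g)"

definition repair :: "'r schema \<Rightarrow> ('r, 'c) fact set \<Rightarrow> ('r, 'c) fact set \<Rightarrow> bool" where
  "repair S s r \<longleftrightarrow> r \<subseteq> s \<and> consistent S r \<and>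
     (\<forall>r'. r \<subseteq> r' \<and> r' \<subseteq> s \<and> consistent S r' \<longrightarrow> r' = r)"

fun val_trm :: "('v \<Rightarrow> 'c) \<Rightarrow> ('v, 'c) trm \<Rightarrow> 'c" where
  "val_trm \<theta> (Var x) = \<theta> x"
| "val_trm \<theta> (Cst c) = c"

definition val_atom :: "('v \<Rightarrow> 'c) \<Rightarrow> ('r, 'v, 'c) atom \<Rightarrow> ('r, 'c) fact" where
  "val_atom \<theta> A = (fst A, map (val_trm \<theta>) (snd A))"

text \<open>Garbage set o for q0 in db (w.r.t. query q).  Condition atom(A) \<in> q0 is
  rendered as: the atom of q with the relation name of A lies in q0.\<close>
definition garbage_set ::
  "'r schema \<Rightarrow> ('r, 'v, 'c) atom set \<Rightarrow> ('r, 'v, 'c) atom set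
    \<Rightarrow> ('r, 'c) fact set \<Rightarrow> ('r, 'c) fact set \<Rightarrow> bool" where
  "garbage_set S q q0 db gs \<longleftrightarrow> gs \<subseteq> db \<and>
     (\<forall>A\<in>gs. (\<exists>\<alpha>\<in>q. fst \<alpha> = fst A \<and> \<alpha> \<in> q0) \<and> block S db A \<subseteq> gs) \<and>
     (\<exists>r. repair S gs r \<and>
        (\<forall>\<theta>. val_atom \<theta> ` q \<subseteq> (db - gs) \<union> r \<longrightarrow> val_atom \<theta> ` q0 \<inter> r = {}))"

end

theory Submission
  imports Defs
begin

text \<open>If \<open>gs\<close> is a union of blocks of \<open>db\<close>, then for any garbage set \<open>o'\<close> the part
  \<open>o' - gs\<close> is a union of blocks of \<open>o'\<close>; a repair of \<open>o'\<close> therefore restricts to a repair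
  of \<open>o' - gs\<close>, and every valuation that is harmless for \<open>o'\<close> in \<open>db\<close> remains harmless for
  \<open>o' - gs\<close> in \<open>db - gs\<close>. So \<open>o' - gs\<close> is a garbage set in \<open>db - gs\<close>, hence empty.\<close>

lemma key_equal_sym: "key_equal S f g \<Longrightarrow> key_equal S g f"
  unfolding key_equal_def by auto

lemma consistent_subset: "consistent S r \<Longrightarrow> r' \<subseteq> r \<Longrightarrow> consistent S r'"
  unfolding consistent_def by blast

lemma consistent_Un:
  assumes "consistent S A" and "consistent S B"
    and "\<And>f g. f \<in> A \<Longrightarrow> g \<in> B \<Longrightarrow> \<not> key_equal S f g"
  shows "consistent S (A \<union> B)"
  using assms key_equal_sym unfolding consistent_def by blast

lemma repair_restrict:
  assumes rep: "repair S s r" and "p \<subseteq> s"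
    and sep: "\<And>f g. f \<in> p \<Longrightarrow> g \<in> s - p \<Longrightarrow> \<not> key_equal S f g"
  shows "repair S p (r \<inter> p)"
  unfolding repair_def
proof (intro conjI allI impI)
  have r_sub: "r \<subseteq> s" and r_cons: "consistent S r"
    using rep unfolding repair_def by auto
  show "r \<inter> p \<subseteq> p" by blast
  show "consistent S (r \<inter> p)" using r_cons by (rule consistent_subset) blast
  fix r'' assume r'': "r \<inter> p \<subseteq> r'' \<and> r'' \<subseteq> p \<and> consistent S r''"
  have "consistent S (r'' \<union> (r - p))"
  proof (rule consistent_Un)
    show "consistent S (r - p)" using r_cons by (rule consistent_subset) blast
    show "\<not> key_equal S f g" if "f \<in> r''" "g \<in> r - p" for f g
      using sep that r'' r_sub by blast
  qed (use r'' in blast)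
  moreover have "r \<subseteq> r'' \<union> (r - p)" and "r'' \<union> (r - p) \<subseteq> s"
    using r'' r_sub \<open>p \<subseteq> s\<close> by blast+
  ultimately have "r'' \<union> (r - p) = r"
    using rep unfolding repair_def by blast
  then show "r'' = r \<inter> p" using r'' by blast
qed

lemma block_closed_not_key_equal:
  assumes "\<And>A. A \<in> gs \<Longrightarrow> block S db A \<subseteq> gs"
    and "f \<in> db - gs" and "g \<in> gs"
  shows "\<not> key_equal S f g"
  using assms key_equal_sym unfolding block_def by blast

lemma garbage_set_Diff_block_closed:
  assumes go: "garbage_set S q q0 db o'"
    and closed: "\<And>A. A \<in> gs \<Longrightarrow> block S db A \<subseteq> gs"
  shows "garbage_set S q q0 (db - gs) (o' - gs)"
proof -
  have o_db: "o' \<subseteq> db"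
    and o_closed: "\<forall>A\<in>o'. (\<exists>\<alpha>\<in>q. fst \<alpha> = fst A \<and> \<alpha> \<in> q0) \<and> block S db A \<subseteq> o'"
    using go unfolding garbage_set_def by auto
  obtain r where rep: "repair S o' r"
    and harmless: "\<And>\<theta>. val_atom \<theta> ` q \<subseteq> (db - o') \<union> r \<Longrightarrow> val_atom \<theta> ` q0 \<inter> r = {}"
    using go unfolding garbage_set_def by blast
  have "repair S (o' - gs) (r \<inter> (o' - gs))"
  proof (rule repair_restrict[OF rep])
    show "\<not> key_equal S f g" if "f \<in> o' - gs" and "g \<in> o' - (o' - gs)" for f g
      using block_closed_not_key_equal[OF closed, of f g] that o_db by blast
  qed blast
  moreover have "val_atom \<theta> ` q0 \<inter> (r \<inter> (o' - gs)) = {}"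
    if "val_atom \<theta> ` q \<subseteq> (db - gs - (o' - gs)) \<union> r \<inter> (o' - gs)" for \<theta>
  proof -
    have "val_atom \<theta> ` q \<subseteq> (db - o') \<union> r" using that by blast
    then show ?thesis using harmless by blast
  qed
  moreover have "block S (db - gs) A \<subseteq> o' - gs" if "A \<in> o' - gs" for A
    using that o_closed unfolding block_def by blast
  ultimately show ?thesis
    using o_db o_closed unfolding garbage_set_def by blast
qed

theorem corollary31:
  fixes S :: "'r schema"
    and q q0 :: "('r, 'v, 'c) atom set"
    and db gs :: "('r, 'c) fact set"
  assumes "wf_schema S"
    and "sjf_query S q"
    and "q0 \<subseteq> q"
    and "database S q db"
    and "garbage_set S q q0 db gs"
    and "\<forall>o'. garbage_set S q q0 (db - gs) o' \<longrightarrow> o' = {}"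
  shows "\<forall>o'. garbage_set S q q0 db o' \<longrightarrow> o' \<subseteq> gs"
proof (intro allI impI)
  fix o' assume "garbage_set S q q0 db o'"
  moreover have "\<And>A. A \<in> gs \<Longrightarrow> block S db A \<subseteq> gs"
    using assms(5) unfolding garbage_set_def by blast
  ultimately have "garbage_set S q q0 (db - gs) (o' - gs)"
    by (rule garbage_set_Diff_block_closed)
  then show "o' \<subseteq> gs" using assms(6) by blast
qed

end
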